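(* Let $x_0\in(0,1)$ and let $0<T\le T_0$. Assume that $u_0\in L^2(0,1)$ is not pointwise null-controllable at $x_0$ in time $T$. For $\varepsilon>0$ with $(x_0-\varepsilon,x_0+\varepsilon)\subset(0,1)$, let $\psi_\varepsilon$ be the optimal $L^2$ null-control of $u_0$ in time $T$ with control domain $(x_0-\varepsilon,x_0+\varepsilon)$. Then $\varepsilon^{1/2}\|\psi_\varepsilon\|_{L^2((0,T)\times(0,1))}\to+\infty$ as $\varepsilon\to0$.
   Context: Consider the heat equation on $(0,1)$ with Dirichlet boundary conditions: $\partial_t u-\partial_{xx}u=f$ in $(0,T)\times(0,1)$, $u(t,0)=u(t,1)=0$, $u(0,\cdot)=u_0\in L^2(0,1)$. A null-control of $u_0$ in time $T$ with control domain $\omega\subset(0,1)$ is an $f\in L^2((0,T)\times(0,1))$ supported in $(0,T)\times\omega$ such that the solution satisfies $u(T,\cdot)=0$; the optimal $L^2$ null-control is the one of minimal $L^2((0,T)\times(0,1))$ norm (it exists since the equation is null-controllable on any open interval in any time). $u_0$ is pointwise null-controllable at $x_0$ in time $T$ if there exists $\psi\in L^2(0,T)$ such that the (well-posed, in $C^0([0,T],L^2(0,1))\cap L^2((0,T),H^1_0(0,1))$) solution with $f(t,\cdot)=\psi(t)\delta_{x_0}$ satisfies $u(T,\cdot)=0$. The heat equation is pointwise observable at $x_0$ in time $T$ if $\inf\{\int_0^T u(t,x_0)^2dt:\ \|u_0\|_{L^2}=1,\ u\text{ solution with } f=0\}>0$. $T_0=T_0(x_0)=\inf\{T>0:\text{pointwise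 observable at }x_0\text{ in time }T\}\in[0,+\infty]$ ($\inf\emptyset=+\infty$). *)

theory Defs
  imports "HOL-Analysis.Analysis"
begin

text \<open>The Dirichlet Laplacian has the orthonormal eigenbasis e_k(x) = sqrt 2 sin(k pi x),
  k >= 1, with eigenvalues (k pi)^2. A state in L2(0,1) is identified with its
  coefficient sequence; the (weak/mild) solution is given by Duhamel's formula
  coefficientwise.\<close>

definition sin_basis :: "nat \<Rightarrow> real \<Rightarrow> real" where
  "sin_basis k x = sqrt 2 * sin (real k * pi * x)"

definition eigval :: "nat \<Rightarrow> real" where
  "eigval k = (real k * pi)^2"

definition is_L2_01 :: "(real \<Rightarrow> real) \<Rightarrow> bool" where
  "is_L2_01 u0 \<longleftrightarrow> u0 \<in> borel_measurable lborel \<and>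
     set_integrable lborel {0<..<1} (\<lambda>x. (u0 x)^2)"

definition L2norm_01 :: "(real \<Rightarrow> real) \<Rightarrow> real" where
  "L2norm_01 u0 = sqrt (LINT x:{0<..<1}|lborel. (u0 x)^2)"

definition coeff :: "(real \<Rightarrow> real) \<Rightarrow> nat \<Rightarrow> real" where
  "coeff u0 k = (LINT x:{0<..<1}|lborel. u0 x * sin_basis k x)"

definition is_L2_QT :: "real \<Rightarrow> (real \<Rightarrow> real \<Rightarrow> real) \<Rightarrow> bool" where
  "is_L2_QT T f \<longleftrightarrow> (\<lambda>(t,x). f t x) \<in> borel_measurable (lborel \<Otimes>\<^sub>M lborel) \<and>
     set_integrable (lborel \<Otimes>\<^sub>M lborel) ({0<..<T} \<times> {0<..<1}) (\<lambda>(t,x). (f t x)^2)"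

definition L2norm_QT :: "real \<Rightarrow> (real \<Rightarrow> real \<Rightarrow> real) \<Rightarrow> real" where
  "L2norm_QT T f = sqrt (LINT z:({0<..<T} \<times> {0<..<1})|(lborel \<Otimes>\<^sub>M lborel). (case z of (t,x) \<Rightarrow> (f t x)^2))"

text \<open>k-th coefficient of u(T) for the solution with initial datum u0 and source f\<close>
definition final_coeff :: "real \<Rightarrow> (real \<Rightarrow> real) \<Rightarrow> (real \<Rightarrow> real \<Rightarrow> real) \<Rightarrow> nat \<Rightarrow> real" where
  "final_coeff T u0 f k = exp (- eigval k * T) * coeff u0 k +
     (LINT s:{0<..<T}|lborel. exp (- eigval k * (T - s)) *
        (LINT x:{0<..<1}|lborel. f s x * sin_basis k x))"

definition null_control :: "real \<Rightarrow> real set \<Rightarrow> (real \<Rightarrow> real) \<Rightarrow> (real \<Rightarrow> real \<Rightarrow> real) \<Rightarrow> bool" where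
  "null_control T \<omega> u0 f \<longleftrightarrow> is_L2_QT T f \<and> (\<forall>t x. x \<notin> \<omega> \<longrightarrow> f t x = 0) \<and>
     (\<forall>k\<ge>1. final_coeff T u0 f k = 0)"

definition optimal_null_control :: "real \<Rightarrow> real set \<Rightarrow> (real \<Rightarrow> real) \<Rightarrow> (real \<Rightarrow> real \<Rightarrow> real) \<Rightarrow> bool" where
  "optimal_null_control T \<omega> u0 f \<longleftrightarrow> null_control T \<omega> u0 f \<and>
     (\<forall>g. null_control T \<omega> u0 g \<longrightarrow> L2norm_QT T f \<le> L2norm_QT T g)"

text \<open>Control f(t,.) = psi(t) delta_{x0}: its k-th coefficient is psi(t) e_k(x0).\<close>
definition pointwise_null_controllable :: "real \<Rightarrow> real \<Rightarrow> (real \<Rightarrow> real) \<Rightarrow> bool" where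
  "pointwise_null_controllable x0 T u0 \<longleftrightarrow> (\<exists>\<psi>. \<psi> \<in> borel_measurable lborel \<and>
     set_integrable lborel {0<..<T} (\<lambda>t. (\<psi> t)^2) \<and>
     (\<forall>k\<ge>1. exp (- eigval k * T) * coeff u0 k +
        sin_basis k x0 * (LINT s:{0<..<T}|lborel. exp (- eigval k * (T - s)) * \<psi> s) = 0))"

definition free_sol :: "(real \<Rightarrow> real) \<Rightarrow> real \<Rightarrow> real \<Rightarrow> real" where
  "free_sol u0 t x = (\<Sum>k. exp (- eigval (Suc k) * t) * coeff u0 (Suc k) * sin_basis (Suc k) x)"

definition pointwise_observable :: "real \<Rightarrow> real \<Rightarrow> bool" where
  "pointwise_observable x0 T \<longleftrightarrow>
     (INF u0 \<in> {u0. is_L2_01 u0 \<and> L2norm_01 u0 = 1}.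
        (\<integral>\<^sup>+ t. ennreal ((free_sol u0 t x0)^2) * indicator {0<..<T} t \<partial>lborel)) > 0"

definition T0 :: "real \<Rightarrow> ereal" where
  "T0 x0 = Inf {ereal T | T. T > 0 \<and> pointwise_observable x0 T}"

end

(*
  Suppose that sqrt \<epsilon> * ||\<psi>_\<epsilon>|| stays bounded along a sequence \<epsilon>_n -> 0 and put
  \<phi>_n(t) = \<integral> \<psi>_\<epsilon>_n(t,x) dx. By Cauchy-Schwarz on the window (x0 - \<epsilon>_n, x0 + \<epsilon>_n),
  ||\<phi>_n||_L2(0,T) <= sqrt(2 \<epsilon>_n) ||\<psi>_\<epsilon>_n||, so (\<phi>_n) is bounded in L2(0,T). As the
  eigenfunctions e_k are Lipschitz, the pointwise control \<phi>_n(t) \<delta>_x0 has the same Duhamel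
  moments as \<psi>_\<epsilon>_n up to O(\<epsilon>_n sqrt \<epsilon>_n ||\<psi>_\<epsilon>_n||) = O(\<epsilon>_n). Hence the inner products of \<phi>_n
  with e_k(x0) exp(-\<lambda>_k (T - t)) converge to -exp(-\<lambda>_k T) (u0, e_k), the values that
  characterise pointwise null-controllability. For a bounded sequence in L2, limits of its inner
  products with a fixed sequence of functions are always the inner products of a single L2
  function (proved via Gram-Schmidt, Bessel's inequality and the completeness of L2); that
  function is a pointwise null-control of u0, a contradiction.
*)

theory Submission
  imports Defs
begin

section \<open>Square-integrable functions\<close>

definition square_integrable :: "'a measure \<Rightarrow> ('a \<Rightarrow> real) \<Rightarrow> bool" where
  "square_integrable M f \<longleftrightarrow> f \<in> borel_measurable M \<and> integrable M (\<lambda>x. (f x)^2)"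

definition L2_inner :: "'a measure \<Rightarrow> ('a \<Rightarrow> real) \<Rightarrow> ('a \<Rightarrow> real) \<Rightarrow> real" where
  "L2_inner M f g = (\<integral>x. f x * g x \<partial>M)"

abbreviation L2_sqnorm :: "'a measure \<Rightarrow> ('a \<Rightarrow> real) \<Rightarrow> real" where
  "L2_sqnorm M f \<equiv> L2_inner M f f"

lemma square_integrable_zero [simp]: "square_integrable M (\<lambda>x. 0)"
  by (simp add: square_integrable_def)

lemma square_integrable_mult_integrable:
  assumes "square_integrable M f" "square_integrable M g"
  shows "integrable M (\<lambda>x. f x * g x)"
proof (rule Bochner_Integration.integrable_bound[of _ "\<lambda>x. (f x)^2 + (g x)^2"])
  show "integrable M (\<lambda>x. (f x)^2 + (g x)^2)" "(\<lambda>x. f x * g x) \<in> borel_measurable M"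
    using assms by (auto simp: square_integrable_def)
  have "\<bar>f x * g x\<bar> \<le> (f x)^2 + (g x)^2" for x
  proof -
    have "2 * \<bar>f x * g x\<bar> \<le> (f x)^2 + (g x)^2"
      using sum_squares_bound[of "\<bar>f x\<bar>" "\<bar>g x\<bar>"] by (simp add: abs_mult mult.assoc)
    then show ?thesis using abs_ge_zero[of "f x * g x"] by linarith
  qed
  then show "AE x in M. norm (f x * g x) \<le> norm ((f x)^2 + (g x)^2)"
    by simp
qed

lemma square_integrable_add:
  assumes f: "square_integrable M f" and g: "square_integrable M g"
  shows "square_integrable M (\<lambda>x. f x + g x)"
proof -
  have "integrable M (\<lambda>x. (f x)^2 + (g x)^2 + 2 * (f x * g x))"
    using f g square_integrable_mult_integrable[OF f g] by (auto simp: square_integrable_def)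
  then show ?thesis
    using f g by (auto simp: square_integrable_def power2_sum mult.assoc)
qed

lemma square_integrable_cmult: "square_integrable M f \<Longrightarrow> square_integrable M (\<lambda>x. c * f x)"
  unfolding square_integrable_def by (auto simp: power_mult_distrib)

lemma square_integrable_diff:
  "square_integrable M f \<Longrightarrow> square_integrable M g \<Longrightarrow> square_integrable M (\<lambda>x. f x - g x)"
  using square_integrable_add[of M f "\<lambda>x. -1 * g x"] square_integrable_cmult[of M g "-1"] by simp

lemma square_integrable_sum:
  "(\<And>i. i \<in> A \<Longrightarrow> square_integrable M (f i)) \<Longrightarrow> square_integrable M (\<lambda>x. \<Sum>i\<in>A. f i x)"
proof (induction A rule: infinite_finite_induct)
  case (insert a A)
  then show ?case using square_integrable_add[of M "f a" "\<lambda>x. \<Sum>i\<in>A. f i x"] by simp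
qed simp_all

lemma square_integrable_abs: "square_integrable M f \<Longrightarrow> square_integrable M (\<lambda>x. \<bar>f x\<bar>)"
  unfolding square_integrable_def by auto

lemma (in finite_measure) square_integrable_const: "square_integrable M (\<lambda>x. c)"
  unfolding square_integrable_def by simp

lemma L2_inner_commute: "L2_inner M f g = L2_inner M g f"
  unfolding L2_inner_def by (simp add: mult.commute)

lemma L2_inner_diff_left:
  "square_integrable M f \<Longrightarrow> square_integrable M g \<Longrightarrow> square_integrable M k \<Longrightarrow>
   L2_inner M (\<lambda>x. f x - g x) k = L2_inner M f k - L2_inner M g k"
  unfolding L2_inner_def by (simp add: left_diff_distrib square_integrable_mult_integrable)

lemma L2_inner_diff_right:
  "square_integrable M f \<Longrightarrow> square_integrable M g \<Longrightarrow> square_integrable M k \<Longrightarrow>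
   L2_inner M k (\<lambda>x. f x - g x) = L2_inner M k f - L2_inner M k g"
  by (simp add: L2_inner_commute[of M k] L2_inner_diff_left)

lemma L2_inner_cmult_left: "L2_inner M (\<lambda>x. c * f x) g = c * L2_inner M f g"
  unfolding L2_inner_def by (simp add: mult.assoc)

lemma L2_inner_cmult_right: "L2_inner M f (\<lambda>x. c * g x) = c * L2_inner M f g"
  by (simp add: L2_inner_commute[of M f] L2_inner_cmult_left)

lemma L2_inner_sum_left:
  "(\<And>i. i \<in> A \<Longrightarrow> square_integrable M (f i)) \<Longrightarrow> square_integrable M g \<Longrightarrow>
   L2_inner M (\<lambda>x. \<Sum>i\<in>A. f i x) g = (\<Sum>i\<in>A. L2_inner M (f i) g)"
  unfolding L2_inner_def sum_distrib_right
  by (subst Bochner_Integration.integral_sum) (auto simp: square_integrable_mult_integrable)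

lemma L2_inner_sum_right:
  "(\<And>i. i \<in> A \<Longrightarrow> square_integrable M (f i)) \<Longrightarrow> square_integrable M g \<Longrightarrow>
   L2_inner M g (\<lambda>x. \<Sum>i\<in>A. f i x) = (\<Sum>i\<in>A. L2_inner M g (f i))"
  by (simp add: L2_inner_commute[of M g] L2_inner_sum_left)

lemma L2_inner_zero_left [simp]: "L2_inner M (\<lambda>x. 0) g = 0"
  and L2_inner_zero_right [simp]: "L2_inner M f (\<lambda>x. 0) = 0"
  by (simp_all add: L2_inner_def)

lemma L2_sqnorm_nonneg: "0 \<le> L2_sqnorm M f"
  unfolding L2_inner_def by (simp add: integral_nonneg_AE)

lemma L2_sqnorm_diff_commute:
  "L2_sqnorm M (\<lambda>x. f x - g x) = L2_sqnorm M (\<lambda>x. g x - f x)"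
  unfolding L2_inner_def by (simp add: algebra_simps)

lemma nn_integral_square_eq_L2_sqnorm:
  assumes "square_integrable M f"
  shows "(\<integral>\<^sup>+x. ennreal ((f x)^2) \<partial>M) = ennreal (L2_sqnorm M f)"
  using assms unfolding square_integrable_def L2_inner_def
  by (subst nn_integral_eq_integral) (auto simp: power2_eq_square)

lemma L2_inner_Cauchy_Schwarz:
  assumes f: "square_integrable M f" and g: "square_integrable M g"
  shows "(L2_inner M f g)^2 \<le> L2_sqnorm M f * L2_sqnorm M g"
proof -
  define a b c where "a = L2_sqnorm M f" and "b = L2_inner M f g" and "c = L2_sqnorm M g"
  have quadratic: "0 \<le> a - 2 * t * b + t^2 * c" for t
  proof -
    have tg: "square_integrable M (\<lambda>x. t * g x)" using g by (rule square_integrable_cmult)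
    have "0 \<le> L2_sqnorm M (\<lambda>x. f x - t * g x)" by (rule L2_sqnorm_nonneg)
    also have "\<dots> = a - 2 * t * b + t^2 * c"
      using f g tg square_integrable_diff[OF f tg] unfolding a_def b_def c_def
      by (simp add: L2_inner_diff_left L2_inner_diff_right L2_inner_cmult_left
          L2_inner_cmult_right L2_inner_commute[of M g f] power2_eq_square algebra_simps)
    finally show ?thesis .
  qed
  show ?thesis
  proof (cases "c = 0")
    case True
    have "b = 0"
    proof (rule ccontr)
      assume "b \<noteq> 0"
      then show False using quadratic[of "(a + 1) / (2 * b)"] True by (simp add: field_simps)
    qed
    then show ?thesis using True by (simp add: b_def[symmetric] c_def[symmetric])
  next
    case False
    then have "0 < c" using L2_sqnorm_nonneg[of M g] by (simp add: c_def)
    then show ?thesis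
      using quadratic[of "b / c"] unfolding a_def[symmetric] b_def[symmetric] c_def[symmetric]
      by (simp add: field_simps power2_eq_square)
  qed
qed

lemma L2_inner_abs_le:
  assumes "square_integrable M f" "square_integrable M g"
  shows "\<bar>L2_inner M f g\<bar> \<le> sqrt (L2_sqnorm M f) * sqrt (L2_sqnorm M g)"
  using real_sqrt_le_mono[OF L2_inner_Cauchy_Schwarz[OF assms]] by (simp add: real_sqrt_mult)

lemma L2_inner_tendsto:
  assumes g: "square_integrable M g" and \<psi>: "square_integrable M \<psi>"
    and \<Psi>: "\<And>n. square_integrable M (\<Psi> n)"
    and lim: "(\<lambda>n. L2_sqnorm M (\<lambda>x. \<psi> x - \<Psi> n x)) \<longlonglongrightarrow> 0"
  shows "(\<lambda>n. L2_inner M g (\<Psi> n)) \<longlonglongrightarrow> L2_inner M g \<psi>"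
proof -
  have diff: "square_integrable M (\<lambda>x. \<psi> x - \<Psi> n x)" for n
    using \<psi> \<Psi> by (rule square_integrable_diff)
  have "(\<lambda>n. L2_inner M g (\<lambda>x. \<psi> x - \<Psi> n x)) \<longlonglongrightarrow> 0"
  proof (rule Lim_null_comparison)
    show "\<forall>\<^sub>F n in sequentially. norm (L2_inner M g (\<lambda>x. \<psi> x - \<Psi> n x))
        \<le> sqrt (L2_sqnorm M g) * sqrt (L2_sqnorm M (\<lambda>x. \<psi> x - \<Psi> n x))"
      using L2_inner_abs_le[OF g diff] by simp
    show "(\<lambda>n. sqrt (L2_sqnorm M g) * sqrt (L2_sqnorm M (\<lambda>x. \<psi> x - \<Psi> n x))) \<longlonglongrightarrow> 0"
      using tendsto_mult_right_zero[OF tendsto_real_sqrt[OF lim, unfolded real_sqrt_zero]] by simp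
  qed
  then have "(\<lambda>n. L2_inner M g \<psi> - L2_inner M g (\<lambda>x. \<psi> x - \<Psi> n x)) \<longlonglongrightarrow> L2_inner M g \<psi> - 0"
    by (intro tendsto_diff tendsto_const)
  then show ?thesis using g \<psi> \<Psi> by (simp add: L2_inner_diff_right)
qed

lemma square_integrable_AE_limit:
  fixes G :: "nat \<Rightarrow> 'a \<Rightarrow> real"
  assumes G: "\<And>m. square_integrable M (G m)" and \<psi>[measurable]: "\<psi> \<in> borel_measurable M"
    and lim: "AE x in M. (\<lambda>m. G m x) \<longlonglongrightarrow> \<psi> x"
    and bound: "\<And>m. m \<ge> N \<Longrightarrow> L2_sqnorm M (G m) \<le> C"
  shows "square_integrable M \<psi>" and "L2_sqnorm M \<psi> \<le> C"
proof -
  have [measurable]: "G m \<in> borel_measurable M" for m using G by (simp add: square_integrable_def)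
  have "(\<integral>\<^sup>+x. ennreal ((\<psi> x)^2) \<partial>M) = (\<integral>\<^sup>+x. liminf (\<lambda>m. ennreal ((G m x)^2)) \<partial>M)"
  proof (rule nn_integral_cong_AE)
    show "AE x in M. ennreal ((\<psi> x)^2) = liminf (\<lambda>m. ennreal ((G m x)^2))"
      using lim
    proof eventually_elim
      case (elim x)
      then have "(\<lambda>m. ennreal ((G m x)^2)) \<longlonglongrightarrow> ennreal ((\<psi> x)^2)"
        by (intro tendsto_ennrealI tendsto_power)
      then show ?case using lim_imp_Liminf[OF sequentially_bot] by metis
    qed
  qed
  also have "\<dots> \<le> liminf (\<lambda>m. \<integral>\<^sup>+x. ennreal ((G m x)^2) \<partial>M)"
    by (rule nn_integral_liminf) simp
  also have "\<dots> \<le> limsup (\<lambda>m. \<integral>\<^sup>+x. ennreal ((G m x)^2) \<partial>M)"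
    by (rule Liminf_le_Limsup) simp
  also have "\<dots> \<le> ennreal C"
    unfolding nn_integral_square_eq_L2_sqnorm[OF G] using bound
    by (intro Limsup_bounded) (auto simp: eventually_sequentially intro: ennreal_leI)
  finally have fin: "(\<integral>\<^sup>+x. ennreal ((\<psi> x)^2) \<partial>M) \<le> ennreal C" .
  then have "integrable M (\<lambda>x. (\<psi> x)^2)"
    by (intro integrableI_bounded) (auto simp: le_less_trans)
  then show sq: "square_integrable M \<psi>" by (simp add: square_integrable_def)
  have "0 \<le> C" using bound[of N] L2_sqnorm_nonneg[of M "G N"] by simp
  then show "L2_sqnorm M \<psi> \<le> C"
    using fin nn_integral_square_eq_L2_sqnorm[OF sq] by (simp add: ennreal_le_iff)
qed

lemma (in finite_measure) nn_integral_abs_le_L2: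
  assumes f: "square_integrable M f"
  shows "(\<integral>\<^sup>+x. ennreal \<bar>f x\<bar> \<partial>M) \<le> ennreal (sqrt (measure M (space M)) * sqrt (L2_sqnorm M f))"
proof -
  have abs_f: "square_integrable M (\<lambda>x. \<bar>f x\<bar>)" using f by (rule square_integrable_abs)
  have one: "square_integrable M (\<lambda>x. 1)" by (rule square_integrable_const)
  have "(\<integral>\<^sup>+x. ennreal \<bar>f x\<bar> \<partial>M) = ennreal (L2_inner M (\<lambda>x. \<bar>f x\<bar>) (\<lambda>x. 1))"
    using square_integrable_mult_integrable[OF abs_f one]
    unfolding L2_inner_def by (simp add: nn_integral_eq_integral)
  also have "L2_inner M (\<lambda>x. \<bar>f x\<bar>) (\<lambda>x. 1)
      \<le> sqrt (L2_sqnorm M (\<lambda>x. \<bar>f x\<bar>)) * sqrt (L2_sqnorm M (\<lambda>x. 1))"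
    using L2_inner_abs_le[OF abs_f one] by simp
  also have "L2_sqnorm M (\<lambda>x. \<bar>f x\<bar>) = L2_sqnorm M f"
    unfolding L2_inner_def by (simp add: abs_mult[symmetric])
  also have "L2_sqnorm M (\<lambda>x. 1) = measure M (space M)"
    unfolding L2_inner_def by simp
  finally show ?thesis by (simp add: mult.commute ennreal_leI)
qed

text \<open>The increments of a sequence converging fast in L2 have summable L1 norms, so the
  sequence converges almost everywhere.\<close>

lemma (in finite_measure) AE_convergent_if_L2_fast:
  fixes F :: "nat \<Rightarrow> 'a \<Rightarrow> real"
  assumes F: "\<And>m. square_integrable M (F m)"
    and fast: "\<And>m. L2_sqnorm M (\<lambda>x. F (Suc m) x - F m x) \<le> (1/4)^m"
  shows "AE x in M. convergent (\<lambda>m. F m x)"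
proof -
  have [measurable]: "F m \<in> borel_measurable M" for m using F by (simp add: square_integrable_def)
  define d where "d m x = F (Suc m) x - F m x" for m x
  define K where "K = sqrt (measure M (space M))"
  have d_L1: "(\<integral>\<^sup>+x. ennreal \<bar>d m x\<bar> \<partial>M) \<le> ennreal (K * (1/2)^m)" for m
  proof -
    have "L2_sqnorm M (d m) \<le> ((1/2)^m)^2"
      using fast[of m] unfolding d_def by (simp add: power_mult_distrib[symmetric] power2_eq_square)
    then have "sqrt (L2_sqnorm M (d m)) \<le> (1/2)^m"
      using real_sqrt_le_mono by fastforce
    then have "K * sqrt (L2_sqnorm M (d m)) \<le> K * (1/2)^m"
      by (simp add: K_def mult_left_mono)
    moreover have "square_integrable M (d m)"
      unfolding d_def by (intro square_integrable_diff F)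
    ultimately show ?thesis
      using nn_integral_abs_le_L2 unfolding K_def by (meson ennreal_leI order_trans)
  qed
  have "(\<integral>\<^sup>+x. (\<Sum>m. ennreal \<bar>d m x\<bar>) \<partial>M) = (\<Sum>m. \<integral>\<^sup>+x. ennreal \<bar>d m x\<bar> \<partial>M)"
    by (rule nn_integral_suminf) (simp add: d_def)
  also have "\<dots> \<le> (\<Sum>m. ennreal (K * (1/2)^m))"
    by (intro suminf_le d_L1 summableI)
  also have "\<dots> = ennreal (\<Sum>m. K * (1/2)^m)"
    by (intro suminf_ennreal2) (auto simp: K_def intro!: summable_mult summable_geometric)
  finally have "(\<integral>\<^sup>+x. (\<Sum>m. ennreal \<bar>d m x\<bar>) \<partial>M) \<noteq> \<infinity>"
    by (auto simp: top_unique)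
  then have "AE x in M. (\<Sum>m. ennreal \<bar>d m x\<bar>) \<noteq> \<infinity>"
    by (intro nn_integral_noteq_infinite) (simp_all add: d_def)
  then show ?thesis
  proof eventually_elim
    case (elim x)
    then have "summable (\<lambda>m. d m x)"
      by (intro summable_rabs_cancel[OF summable_suminf_not_top]) (auto simp: top_unique)
    then have "(\<lambda>m. F 0 x + (\<Sum>i<m. d i x)) \<longlonglongrightarrow> F 0 x + (\<Sum>i. d i x)"
      by (intro tendsto_add tendsto_const summable_LIMSEQ)
    moreover have "F 0 x + (\<Sum>i<m. d i x) = F m x" for m
      unfolding d_def using sum_lessThan_telescope[of "\<lambda>i. F i x" m] by simp
    ultimately show ?case by (auto intro: convergentI)
  qed
qed

lemma (in finite_measure) L2_limit_if_Cauchy_modulus: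
  fixes F :: "nat \<Rightarrow> 'a \<Rightarrow> real"
  assumes F: "\<And>n. square_integrable M (F n)"
    and N: "\<And>m p q. p \<ge> N m \<Longrightarrow> q \<ge> N m \<Longrightarrow> L2_sqnorm M (\<lambda>x. F p x - F q x) < (1/4)^m"
  obtains \<psi> where "\<And>m p. p \<ge> N m \<Longrightarrow> square_integrable M (\<lambda>x. \<psi> x - F p x)"
    and "\<And>m p. p \<ge> N m \<Longrightarrow> L2_sqnorm M (\<lambda>x. \<psi> x - F p x) \<le> (1/4)^m"
proof -
  have [measurable]: "F n \<in> borel_measurable M" for n using F by (simp add: square_integrable_def)
  define r where "r m = m + (\<Sum>i\<le>m. N i)" for m
  have N_le_r: "N m \<le> r m" for m
    unfolding r_def using member_le_sum[of m "{..m}" N] by simp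
  have "AE x in M. convergent (\<lambda>m. F (r m) x)"
  proof (rule AE_convergent_if_L2_fast)
    show "L2_sqnorm M (\<lambda>x. F (r (Suc m)) x - F (r m) x) \<le> (1/4)^m" for m
      using N[of m "r (Suc m)" "r m"] N_le_r[of m] by (simp add: r_def)
  qed (rule F)
  then have r_lim: "AE x in M. (\<lambda>m. F (r m) x) \<longlonglongrightarrow> lim (\<lambda>m. F (r m) x)"
    by (simp add: convergent_LIMSEQ_iff)
  define \<psi> where "\<psi> x = lim (\<lambda>m. F (r m) x)" for x
  have [measurable]: "\<psi> \<in> borel_measurable M" unfolding \<psi>_def by measurable
  have "square_integrable M (\<lambda>x. \<psi> x - F p x) \<and> L2_sqnorm M (\<lambda>x. \<psi> x - F p x) \<le> (1/4)^m"
    if "p \<ge> N m" for m p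
  proof -
    have lim: "AE x in M. (\<lambda>k. F (r k) x - F p x) \<longlonglongrightarrow> \<psi> x - F p x"
      using r_lim by eventually_elim (simp add: \<psi>_def tendsto_diff)
    have bound: "L2_sqnorm M (\<lambda>x. F (r k) x - F p x) \<le> (1/4)^m" if "N m \<le> k" for k
    proof -
      have "N m \<le> r k" using that by (simp add: r_def)
      then show ?thesis using N[of m "r k" p] \<open>p \<ge> N m\<close> by (simp add: less_imp_le)
    qed
    have sq: "square_integrable M (\<lambda>x. F (r k) x - F p x)" for k
      by (intro square_integrable_diff F)
    have "(\<lambda>x. \<psi> x - F p x) \<in> borel_measurable M" by measurable
    from square_integrable_AE_limit[OF sq this lim bound] show ?thesis by blast
  qed
  with that show thesis by blast
qed

lemma (in finite_measure) L2_Cauchy_convergent: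
  fixes F :: "nat \<Rightarrow> 'a \<Rightarrow> real"
  assumes F: "\<And>n. square_integrable M (F n)"
    and Cauchy: "\<And>\<delta>. \<delta> > 0 \<Longrightarrow> \<exists>N. \<forall>p\<ge>N. \<forall>q\<ge>N. L2_sqnorm M (\<lambda>x. F p x - F q x) < \<delta>"
  obtains \<psi> where "square_integrable M \<psi>"
    and "(\<lambda>n. L2_sqnorm M (\<lambda>x. \<psi> x - F n x)) \<longlonglongrightarrow> 0"
proof -
  have "\<forall>m. \<exists>N. \<forall>p\<ge>N. \<forall>q\<ge>N. L2_sqnorm M (\<lambda>x. F p x - F q x) < (1/4)^m"
    using Cauchy by simp
  then obtain N where N: "\<And>m p q. p \<ge> N m \<Longrightarrow> q \<ge> N m \<Longrightarrow>
      L2_sqnorm M (\<lambda>x. F p x - F q x) < (1/4)^m"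
    by metis
  obtain \<psi> where sq: "\<And>m p. p \<ge> N m \<Longrightarrow> square_integrable M (\<lambda>x. \<psi> x - F p x)"
    and close: "\<And>m p. p \<ge> N m \<Longrightarrow> L2_sqnorm M (\<lambda>x. \<psi> x - F p x) \<le> (1/4)^m"
    using L2_limit_if_Cauchy_modulus[of F N, OF F N] by blast
  show thesis
  proof
    have "square_integrable M (\<lambda>x. (\<psi> x - F (N 0) x) + F (N 0) x)"
      using sq[of 0 "N 0"] by (intro square_integrable_add F) simp_all
    then show "square_integrable M \<psi>" by simp
    show "(\<lambda>n. L2_sqnorm M (\<lambda>x. \<psi> x - F n x)) \<longlonglongrightarrow> 0"
    proof (rule LIMSEQ_I)
      fix \<delta> :: real assume "0 < \<delta>"
      then obtain m where m: "(1/4)^m < \<delta>" using real_arch_pow_inv[of \<delta> "1/4"] by auto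
      have "norm (L2_sqnorm M (\<lambda>x. \<psi> x - F n x) - 0) < \<delta>" if "n \<ge> N m" for n
        using close[OF that] L2_sqnorm_nonneg[of M "\<lambda>x. \<psi> x - F n x"] m by simp
      then show "\<exists>n0. \<forall>n\<ge>n0. norm (L2_sqnorm M (\<lambda>x. \<psi> x - F n x) - 0) < \<delta>"
        by blast
    qed
  qed
qed

section \<open>Gram-Schmidt orthonormalisation\<close>

text \<open>Where h j depends linearly on h 0, ..., h (j - 1) the residual vanishes and gs j is
  set to 0, so gs is orthonormal only on the indices where gs_nonzero holds.\<close>

locale gram_schmidt = finite_measure M for M :: "'a measure" +
  fixes h :: "nat \<Rightarrow> 'a \<Rightarrow> real"
  assumes square_integrable_h: "\<And>k. square_integrable M (h k)"
begin

function gs :: "nat \<Rightarrow> 'a \<Rightarrow> real" where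
  "gs j = (let u = (\<lambda>x. h j x - (\<Sum>i<j. L2_inner M (h j) (gs i) * gs i x)) in
          if L2_sqnorm M u > 0 then (\<lambda>x. u x / sqrt (L2_sqnorm M u)) else (\<lambda>x. 0))"
  by pat_completeness auto
termination by (relation "Wellfounded.measure id") auto

declare gs.simps[simp del]

definition gs_residual :: "nat \<Rightarrow> 'a \<Rightarrow> real" where
  "gs_residual j = (\<lambda>x. h j x - (\<Sum>i<j. L2_inner M (h j) (gs i) * gs i x))"

definition gs_nonzero :: "nat \<Rightarrow> bool" where
  "gs_nonzero j \<longleftrightarrow> L2_sqnorm M (gs_residual j) > 0"

lemma gs_eq:
  "gs j = (if gs_nonzero j
     then (\<lambda>x. inverse (sqrt (L2_sqnorm M (gs_residual j))) * gs_residual j x) else (\<lambda>x. 0))"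
  by (subst gs.simps) (auto simp: gs_residual_def gs_nonzero_def Let_def field_simps)

lemma gs_eq_0: "\<not> gs_nonzero j \<Longrightarrow> gs j = (\<lambda>x. 0)"
  by (simp add: gs_eq)

lemma square_integrable_gs: "square_integrable M (gs j)"
proof (induction j rule: less_induct)
  case (less j)
  have "square_integrable M (gs_residual j)"
    unfolding gs_residual_def
    by (intro square_integrable_diff square_integrable_h square_integrable_sum
        square_integrable_cmult less) auto
  then show ?case
    by (auto simp: gs_eq intro: square_integrable_cmult)
qed

lemma square_integrable_gs_residual: "square_integrable M (gs_residual j)"
  unfolding gs_residual_def
  by (intro square_integrable_diff square_integrable_h square_integrable_sum
      square_integrable_cmult square_integrable_gs)

lemma square_integrable_gs_sum: "square_integrable M (\<lambda>x. \<Sum>l\<in>A. a l * gs l x)"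
  by (intro square_integrable_sum square_integrable_cmult square_integrable_gs)

lemma L2_inner_gs_residual:
  assumes g: "square_integrable M g"
  shows "L2_inner M (gs_residual j) g
    = L2_inner M (h j) g - (\<Sum>i<j. L2_inner M (h j) (gs i) * L2_inner M (gs i) g)"
proof -
  have "L2_inner M (\<lambda>x. \<Sum>i<j. L2_inner M (h j) (gs i) * gs i x) g
      = (\<Sum>i<j. L2_inner M (\<lambda>x. L2_inner M (h j) (gs i) * gs i x) g)"
    by (rule L2_inner_sum_left) (auto intro!: square_integrable_cmult square_integrable_gs g)
  then show ?thesis
    unfolding gs_residual_def
    by (subst L2_inner_diff_left)
      (auto intro!: square_integrable_h square_integrable_gs_sum g simp: L2_inner_cmult_left)
qed

lemma gs_residual_eq: "gs_nonzero j \<Longrightarrow> gs_residual j = (\<lambda>x. sqrt (L2_sqnorm M (gs_residual j)) * gs j x)"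
  by (auto simp: gs_eq gs_nonzero_def mult.assoc[symmetric])

lemma L2_inner_gs_residual_gs:
  assumes ortho: "\<And>i l. i < j \<Longrightarrow> l < j \<Longrightarrow>
      L2_inner M (gs i) (gs l) = (if i = l \<and> gs_nonzero i then 1 else 0)"
    and "i < j"
  shows "L2_inner M (gs_residual j) (gs i) = 0"
proof -
  have "(\<Sum>l<j. L2_inner M (h j) (gs l) * L2_inner M (gs l) (gs i))
      = (\<Sum>l<j. if l = i then (if gs_nonzero i then L2_inner M (h j) (gs i) else 0) else 0)"
    by (intro sum.cong refl) (auto simp: ortho \<open>i < j\<close>)
  then show ?thesis
    using \<open>i < j\<close> by (simp add: L2_inner_gs_residual square_integrable_gs gs_eq_0)
qed

lemma L2_inner_gs_gs: "L2_inner M (gs i) (gs l) = (if i = l \<and> gs_nonzero i then 1 else 0)"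
proof -
  have "\<forall>i<n. \<forall>l<n. L2_inner M (gs i) (gs l) = (if i = l \<and> gs_nonzero i then 1 else 0)" for n
  proof (induction n)
    case (Suc n)
    have new: "L2_inner M (gs n) (gs i) = 0" if "i < n" for i
      using Suc.IH that L2_inner_gs_residual_gs[of n i]
      by (cases "gs_nonzero n") (auto simp: gs_eq L2_inner_cmult_left)
    have self: "L2_inner M (gs n) (gs n) = (if gs_nonzero n then 1 else 0)"
    proof (cases "gs_nonzero n")
      case True
      define a where "a = L2_sqnorm M (gs_residual n)"
      have "0 < a" using True by (simp add: gs_nonzero_def a_def)
      have "L2_inner M (gs n) (gs n) = inverse (sqrt a) * inverse (sqrt a) * a"
        using True by (simp add: gs_eq a_def L2_inner_cmult_left L2_inner_cmult_right)
      also have "\<dots> = 1" using \<open>0 < a\<close> by (simp add: field_simps)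
      finally show ?thesis using True by simp
    qed (simp add: gs_eq_0)
    show ?case
    proof (intro allI impI)
      fix i l assume "i < Suc n" "l < Suc n"
      then consider "i < n" "l < n" | "i = n" "l < n" | "i < n" "l = n" | "i = n" "l = n"
        by linarith
      then show "L2_inner M (gs i) (gs l) = (if i = l \<and> gs_nonzero i then 1 else 0)"
        using Suc.IH new self L2_inner_commute[of M "gs i" "gs n"] by cases auto
    qed
  qed simp
  from this[of "Suc (max i l)"] show ?thesis by simp
qed

lemma L2_inner_h_gs_self:
  assumes "gs_nonzero k"
  shows "L2_inner M (h k) (gs k) = sqrt (L2_sqnorm M (gs_residual k))"
proof -
  have "L2_inner M (gs_residual k) (gs k) = L2_inner M (h k) (gs k)"
    by (simp add: L2_inner_gs_residual square_integrable_gs L2_inner_gs_gs)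
  moreover have "L2_inner M (gs_residual k) (gs k) = sqrt (L2_sqnorm M (gs_residual k))"
    using assms by (subst gs_residual_eq) (simp_all add: L2_inner_cmult_left L2_inner_gs_gs)
  ultimately show ?thesis by simp
qed

lemma L2_inner_h_expand:
  assumes g: "square_integrable M g"
  shows "L2_inner M (h k) g = (\<Sum>i<Suc k. L2_inner M (h k) (gs i) * L2_inner M (gs i) g)"
proof -
  have "L2_inner M (gs_residual k) g = L2_inner M (h k) (gs k) * L2_inner M (gs k) g"
  proof (cases "gs_nonzero k")
    case True
    then show ?thesis
      by (subst gs_residual_eq) (simp_all add: L2_inner_cmult_left L2_inner_h_gs_self)
  next
    case False
    then have "L2_sqnorm M (gs_residual k) = 0"
      using L2_sqnorm_nonneg[of M "gs_residual k"] by (simp add: gs_nonzero_def)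
    then have "L2_inner M (gs_residual k) g = 0"
      using L2_inner_Cauchy_Schwarz[OF square_integrable_gs_residual[of k] g] by simp
    then show ?thesis using False by (simp add: gs_eq_0)
  qed
  then show ?thesis using L2_inner_gs_residual[OF g, of k] by simp
qed

lemma L2_inner_gs_sum:
  assumes "finite A" "\<And>l. l \<in> A \<Longrightarrow> \<not> gs_nonzero l \<Longrightarrow> a l = 0"
  shows "L2_inner M (gs j) (\<lambda>x. \<Sum>l\<in>A. a l * gs l x) = (if j \<in> A then a j else 0)"
proof -
  have "L2_inner M (gs j) (\<lambda>x. \<Sum>l\<in>A. a l * gs l x) = (\<Sum>l\<in>A. a l * L2_inner M (gs j) (gs l))"
    by (subst L2_inner_sum_right)
      (auto intro!: square_integrable_cmult square_integrable_gs simp: L2_inner_cmult_right)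
  also have "\<dots> = (\<Sum>l\<in>A. if l = j then a j else 0)"
    using assms(2) by (intro sum.cong refl) (auto simp: L2_inner_gs_gs)
  finally show ?thesis
    using assms(1) by (simp add: sum.delta')
qed

lemma L2_sqnorm_gs_sum:
  assumes "finite A" "\<And>l. l \<in> A \<Longrightarrow> \<not> gs_nonzero l \<Longrightarrow> a l = 0"
  shows "L2_sqnorm M (\<lambda>x. \<Sum>l\<in>A. a l * gs l x) = (\<Sum>l\<in>A. (a l)^2)"
proof -
  have "L2_sqnorm M (\<lambda>x. \<Sum>l\<in>A. a l * gs l x)
      = (\<Sum>j\<in>A. a j * L2_inner M (gs j) (\<lambda>x. \<Sum>l\<in>A. a l * gs l x))"
    by (subst L2_inner_sum_left)
      (auto intro!: square_integrable_cmult square_integrable_gs square_integrable_gs_sum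
        simp: L2_inner_cmult_left)
  then show ?thesis
    using assms by (simp add: L2_inner_gs_sum power2_eq_square)
qed

lemma Bessel_inequality:
  assumes \<phi>: "square_integrable M \<phi>"
  shows "(\<Sum>j<J. (L2_inner M (gs j) \<phi>)^2) \<le> L2_sqnorm M \<phi>"
proof -
  define a where "a j = L2_inner M (gs j) \<phi>" for j
  define P where "P x = (\<Sum>j<J. a j * gs j x)" for x
  have P: "square_integrable M P"
    unfolding P_def[abs_def] by (rule square_integrable_gs_sum)
  have "L2_sqnorm M P = (\<Sum>j<J. (a j)^2)"
    unfolding P_def[abs_def] by (intro L2_sqnorm_gs_sum) (auto simp: a_def gs_eq_0)
  moreover have "L2_inner M P \<phi> = (\<Sum>j<J. (a j)^2)"
    unfolding P_def[abs_def]
    by (subst L2_inner_sum_left) (auto intro!: square_integrable_cmult square_integrable_gs \<phi>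
        simp: L2_inner_cmult_left a_def power2_eq_square)
  moreover have "0 \<le> L2_sqnorm M (\<lambda>x. \<phi> x - P x)"
    by (rule L2_sqnorm_nonneg)
  ultimately show ?thesis
    using \<phi> P square_integrable_diff[OF \<phi> P]
    by (simp add: a_def L2_inner_diff_left L2_inner_diff_right L2_inner_commute[of M \<phi> P])
qed

lemma gs_coeffs_convergent:
  assumes \<phi>: "\<And>n. square_integrable M (\<phi> n)"
    and lim: "\<And>k. convergent (\<lambda>n. L2_inner M (h k) (\<phi> n))"
  shows "convergent (\<lambda>n. L2_inner M (gs j) (\<phi> n))"
proof (induction j rule: less_induct)
  case (less j)
  show ?case
  proof (cases "gs_nonzero j")
    case True
    then have "L2_inner M (h j) (gs j) \<noteq> 0"
      by (simp add: L2_inner_h_gs_self gs_nonzero_def)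
    moreover have "convergent (\<lambda>n. L2_inner M (h j) (gs j) * L2_inner M (gs j) (\<phi> n))"
    proof -
      have "convergent (\<lambda>n. L2_inner M (h j) (\<phi> n)
          - (\<Sum>i<j. L2_inner M (h j) (gs i) * L2_inner M (gs i) (\<phi> n)))"
        using less lim by (intro convergent_diff convergent_sum convergent_mult convergent_const) auto
      then show ?thesis by (simp add: L2_inner_h_expand[OF \<phi>])
    qed
    ultimately show ?thesis by (simp add: convergent_mult_const_iff)
  qed (simp add: gs_eq_0 convergent_const)
qed

lemma gs_series_exists:
  assumes summable: "summable (\<lambda>j. (\<beta> j)^2)"
    and \<beta>_0: "\<And>j. \<not> gs_nonzero j \<Longrightarrow> \<beta> j = 0"
  obtains \<psi> where "square_integrable M \<psi>" and "\<And>j. L2_inner M (gs j) \<psi> = \<beta> j"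
proof -
  define \<Psi> where "\<Psi> n x = (\<Sum>j<n. \<beta> j * gs j x)" for n x
  have \<Psi>: "square_integrable M (\<Psi> n)" for n
    unfolding \<Psi>_def[abs_def] by (rule square_integrable_gs_sum)
  have \<Psi>_diff: "L2_sqnorm M (\<lambda>x. \<Psi> p x - \<Psi> q x) = (\<Sum>j\<in>{q..<p}. (\<beta> j)^2)" if "q \<le> p" for p q
  proof -
    have "\<Psi> p x - \<Psi> q x = (\<Sum>j\<in>{q..<p}. \<beta> j * gs j x)" for x
      unfolding \<Psi>_def lessThan_atLeast0
      using sum.atLeastLessThan_concat[of 0 q p "\<lambda>j. \<beta> j * gs j x"] that by simp
    then show ?thesis using \<beta>_0 by (simp add: L2_sqnorm_gs_sum)
  qed
  have Cauchy: "\<exists>N. \<forall>p\<ge>N. \<forall>q\<ge>N. L2_sqnorm M (\<lambda>x. \<Psi> p x - \<Psi> q x) < \<delta>" if "0 < \<delta>" for \<delta>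
  proof -
    obtain N where N: "\<And>m n. m \<ge> N \<Longrightarrow> norm (\<Sum>j\<in>{m..<n}. (\<beta> j)^2) < \<delta>"
      using summable \<open>0 < \<delta>\<close> unfolding summable_Cauchy by blast
    have small: "L2_sqnorm M (\<lambda>x. \<Psi> p x - \<Psi> q x) < \<delta>" if "N \<le> q" "q \<le> p" for p q
      using N[OF that(1), of p] \<Psi>_diff[OF that(2)] by (simp add: sum_nonneg)
    have "L2_sqnorm M (\<lambda>x. \<Psi> p x - \<Psi> q x) < \<delta>" if "N \<le> p" "N \<le> q" for p q
      using small[of q p] small[of p q] that L2_sqnorm_diff_commute[of M "\<Psi> p" "\<Psi> q"]
      by (cases "q \<le> p") auto
    then show ?thesis by blast
  qed
  obtain \<psi> where \<psi>: "square_integrable M \<psi>"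
    and lim: "(\<lambda>n. L2_sqnorm M (\<lambda>x. \<psi> x - \<Psi> n x)) \<longlonglongrightarrow> 0"
    using L2_Cauchy_convergent[OF \<Psi> Cauchy] by blast
  have "L2_inner M (gs j) \<psi> = \<beta> j" for j
  proof (rule LIMSEQ_unique)
    show "(\<lambda>n. L2_inner M (gs j) (\<Psi> n)) \<longlonglongrightarrow> L2_inner M (gs j) \<psi>"
      by (rule L2_inner_tendsto[OF square_integrable_gs \<psi> \<Psi> lim])
    have "\<forall>\<^sub>F n in sequentially. L2_inner M (gs j) (\<Psi> n) = \<beta> j"
      unfolding eventually_sequentially \<Psi>_def[abs_def] using \<beta>_0
      by (intro exI[of _ "Suc j"]) (auto simp: L2_inner_gs_sum)
    then show "(\<lambda>n. L2_inner M (gs j) (\<Psi> n)) \<longlonglongrightarrow> \<beta> j"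
      by (rule tendsto_eventually)
  qed
  with \<psi> that show thesis by blast
qed

lemma L2_moment_limits_attained:
  assumes \<phi>: "\<And>n. square_integrable M (\<phi> n)" and bounded: "\<And>n. L2_sqnorm M (\<phi> n) \<le> C"
    and lim: "\<And>k. (\<lambda>n. L2_inner M (h k) (\<phi> n)) \<longlonglongrightarrow> b k"
  obtains \<psi> where "square_integrable M \<psi>" and "\<And>k. L2_inner M (h k) \<psi> = b k"
proof -
  define \<beta> where "\<beta> j = lim (\<lambda>n. L2_inner M (gs j) (\<phi> n))" for j
  have "convergent (\<lambda>n. L2_inner M (gs j) (\<phi> n))" for j
    using \<phi> lim by (intro gs_coeffs_convergent) (auto intro: convergentI)
  then have \<beta>_lim: "(\<lambda>n. L2_inner M (gs j) (\<phi> n)) \<longlonglongrightarrow> \<beta> j" for j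
    unfolding \<beta>_def by (simp add: convergent_LIMSEQ_iff)
  have \<beta>_0: "\<not> gs_nonzero j \<Longrightarrow> \<beta> j = 0" for j
    using \<beta>_lim[of j] by (simp add: gs_eq_0 LIMSEQ_const_iff)
  have "(\<Sum>j<J. (\<beta> j)^2) \<le> C" for J
  proof (rule tendsto_le[OF sequentially_bot tendsto_const])
    show "(\<lambda>n. \<Sum>j<J. (L2_inner M (gs j) (\<phi> n))^2) \<longlonglongrightarrow> (\<Sum>j<J. (\<beta> j)^2)"
      by (intro tendsto_intros \<beta>_lim)
    show "\<forall>\<^sub>F n in sequentially. (\<Sum>j<J. (L2_inner M (gs j) (\<phi> n))^2) \<le> C"
      by (intro always_eventually allI order_trans[OF Bessel_inequality[OF \<phi>] bounded])
  qed
  then have "summable (\<lambda>j. (\<beta> j)^2)"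
    by (intro summableI_nonneg_bounded) auto
  then obtain \<psi> where \<psi>: "square_integrable M \<psi>" and \<psi>_coeffs: "\<And>j. L2_inner M (gs j) \<psi> = \<beta> j"
    using gs_series_exists \<beta>_0 by blast
  have "L2_inner M (h k) \<psi> = b k" for k
  proof (rule LIMSEQ_unique[OF _ lim])
    show "(\<lambda>n. L2_inner M (h k) (\<phi> n)) \<longlonglongrightarrow> L2_inner M (h k) \<psi>"
      unfolding L2_inner_h_expand[OF \<phi>] L2_inner_h_expand[OF \<psi>] \<psi>_coeffs
      by (intro tendsto_intros \<beta>_lim)
  qed
  with \<psi> that show thesis by blast
qed

end

section \<open>Controls localized near x0\<close>

lemma ennreal_abs_integral_le: "ennreal \<bar>\<integral>x. f x \<partial>M\<bar> \<le> (\<integral>\<^sup>+x. ennreal \<bar>f x\<bar> \<partial>M)"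
  for f :: "'a \<Rightarrow> real"
  using integral_norm_bound_ennreal[of M f] by (cases "integrable M f") (simp_all add: not_integrable_integral_eq)

lemma ennreal_le_sqrt_if_square_le:
  fixes a :: ennreal
  assumes "a^2 \<le> ennreal r" "0 \<le> r"
  shows "a \<le> ennreal (sqrt r)"
proof -
  have "a \<noteq> \<infinity>"
    using assms(1) by (auto simp: power2_eq_square top_unique)
  then obtain t where t: "a = ennreal t" "0 \<le> t" by (cases a) auto
  then have "t^2 \<le> r" using assms by (simp add: ennreal_power ennreal_le_iff)
  then show ?thesis using t real_le_rsqrt by (simp add: ennreal_leI)
qed

lemma abs_sin_diff_le: "\<bar>sin a - sin b\<bar> \<le> \<bar>a - b\<bar>" for a b :: real
proof -
  have "\<bar>sin a - sin b\<bar> = 2 * \<bar>sin ((a - b) / 2)\<bar> * \<bar>cos ((a + b) / 2)\<bar>"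
    by (simp only: sin_diff_sin abs_mult abs_numeral)
  also have "\<dots> \<le> 2 * \<bar>(a - b) / 2\<bar> * 1"
    by (intro mult_mono abs_sin_x_le_abs_x abs_cos_le_one) auto
  finally show ?thesis by simp
qed

lemma sin_basis_0 [simp]: "sin_basis 0 x = 0"
  by (simp add: sin_basis_def)

lemma coeff_0 [simp]: "coeff u0 0 = 0"
  by (simp add: coeff_def)

lemma sin_basis_measurable [measurable]: "sin_basis k \<in> borel_measurable lborel"
  unfolding sin_basis_def by measurable

lemma abs_sin_basis_le: "\<bar>sin_basis k x\<bar> \<le> sqrt 2"
  unfolding sin_basis_def abs_mult by (simp add: mult_left_le)

text \<open>The summand 1 only keeps the constant positive.\<close>

definition sin_basis_lip :: "nat \<Rightarrow> real" where
  "sin_basis_lip k = sqrt 2 * real k * pi + 1"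

lemma sin_basis_lip_pos: "0 < sin_basis_lip k"
  unfolding sin_basis_lip_def by (simp add: add_nonneg_pos)

lemma abs_sin_basis_diff_le: "\<bar>sin_basis k a - sin_basis k b\<bar> \<le> sin_basis_lip k * \<bar>a - b\<bar>"
proof -
  have "\<bar>sin_basis k a - sin_basis k b\<bar>
      = sqrt 2 * \<bar>sin (real k * pi * a) - sin (real k * pi * b)\<bar>"
    unfolding sin_basis_def by (simp add: abs_mult right_diff_distrib[symmetric])
  also have "\<dots> \<le> sqrt 2 * (real k * pi * \<bar>a - b\<bar>)"
    using abs_sin_diff_le[of "real k * pi * a" "real k * pi * b"]
    by (intro mult_left_mono) (simp_all add: right_diff_distrib[symmetric] abs_mult)
  also have "\<dots> \<le> sin_basis_lip k * \<bar>a - b\<bar>"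
    unfolding sin_basis_lip_def by (simp add: distrib_right)
  finally show ?thesis .
qed

lemma abs_mult_sin_basis_le: "\<bar>y * sin_basis k x\<bar> \<le> sqrt 2 * \<bar>y\<bar>"
proof -
  have "\<bar>y\<bar> * \<bar>sin_basis k x\<bar> \<le> \<bar>y\<bar> * sqrt 2"
    by (intro mult_left_mono abs_sin_basis_le) simp
  then show ?thesis by (simp add: abs_mult mult.commute)
qed

lemma integrable_mult_sin_basis:
  assumes "integrable lborel g"
  shows "integrable lborel (\<lambda>x. g x * sin_basis k x)"
proof (rule Bochner_Integration.integrable_bound[OF integrable_mult_right[OF assms, of "sqrt 2"]])
  show "AE x in lborel. norm (g x * sin_basis k x) \<le> norm (sqrt 2 * g x)"
    using abs_mult_sin_basis_le[of "g _" k] by (simp add: abs_mult)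
qed (use assms in simp)

lemma eigval_nonneg: "0 \<le> eigval k"
  by (simp add: eigval_def)

lemma abs_exp_decay_mult_le: "s \<le> T \<Longrightarrow> \<bar>exp (- eigval k * (T - s)) * y\<bar> \<le> \<bar>y\<bar>"
  using eigval_nonneg[of k] by (simp add: abs_mult mult_left_le_one_le mult_nonneg_nonneg)

definition time_measure :: "real \<Rightarrow> real measure" where
  "time_measure T = restrict_space lborel {0<..<T}"

lemma space_time_measure [simp]: "space (time_measure T) = {0<..<T}"
  by (simp add: time_measure_def space_restrict_space)

lemma measurable_time_measure: "g \<in> borel_measurable lborel \<Longrightarrow> g \<in> borel_measurable (time_measure T)"
  unfolding time_measure_def by (rule measurable_restrict_space1)

lemma emeasure_time_measure: "0 < T \<Longrightarrow> emeasure (time_measure T) {0<..<T} = ennreal T"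
  unfolding time_measure_def by (subst emeasure_restrict_space) auto

lemma finite_measure_time_measure: "0 < T \<Longrightarrow> finite_measure (time_measure T)"
  by (rule finite_measureI) (simp add: emeasure_time_measure)

text \<open>The moment conditions in the definition of pointwise null-controllability at x0 are
  L2(0,T) inner products with these functions.\<close>

definition moment_kernel :: "real \<Rightarrow> real \<Rightarrow> nat \<Rightarrow> real \<Rightarrow> real" where
  "moment_kernel T x0 k s = sin_basis k x0 * exp (- eigval k * (T - s))"

lemma moment_kernel_0 [simp]: "moment_kernel T x0 0 = (\<lambda>s. 0)"
  by (simp add: moment_kernel_def fun_eq_iff)

lemma abs_moment_kernel_le: "s \<le> T \<Longrightarrow> \<bar>moment_kernel T x0 k s\<bar> \<le> sqrt 2"
  using abs_exp_decay_mult_le[of s T k "sin_basis k x0"] abs_sin_basis_le[of k x0]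
  unfolding moment_kernel_def by (simp add: mult.commute)

lemma square_integrable_moment_kernel:
  assumes "0 < T"
  shows "square_integrable (time_measure T) (moment_kernel T x0 k)"
proof -
  have [measurable]: "moment_kernel T x0 k \<in> borel_measurable (time_measure T)"
    unfolding moment_kernel_def by (intro measurable_time_measure) measurable
  have "AE s in time_measure T. norm ((moment_kernel T x0 k s)^2) \<le> 2"
  proof (rule AE_I2)
    fix s assume "s \<in> space (time_measure T)"
    then have "\<bar>moment_kernel T x0 k s\<bar> \<le> sqrt 2" by (intro abs_moment_kernel_le) simp
    from power_mono[OF this, of 2] show "norm ((moment_kernel T x0 k s)^2) \<le> 2" by simp
  qed
  then have "integrable (time_measure T) (\<lambda>s. (moment_kernel T x0 k s)^2)"
    by (intro finite_measure.integrable_const_bound[OF finite_measure_time_measure[OF assms]]) simp_all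
  then show ?thesis by (simp add: square_integrable_def)
qed

definition space_integral :: "(real \<Rightarrow> real \<Rightarrow> real) \<Rightarrow> real \<Rightarrow> real" where
  "space_integral f t = (\<integral>x. f t x \<partial>lborel)"

locale localized_control =
  fixes T x0 \<epsilon> :: real and f :: "real \<Rightarrow> real \<Rightarrow> real"
  assumes T_pos: "0 < T" and eps_pos: "0 < \<epsilon>"
    and window: "{x0 - \<epsilon><..<x0 + \<epsilon>} \<subseteq> {0<..<1}"
    and L2: "is_L2_QT T f"
    and support: "\<And>t x. x \<notin> {x0 - \<epsilon><..<x0 + \<epsilon>} \<Longrightarrow> f t x = 0"
begin

definition energy :: real where
  "energy = (LINT z:({0<..<T} \<times> {0<..<1})|(lborel \<Otimes>\<^sub>M lborel). (case z of (t,x) \<Rightarrow> (f t x)^2))"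

definition slice_energy :: "real \<Rightarrow> ennreal" where
  "slice_energy t = (\<integral>\<^sup>+x. ennreal ((f t x)^2) \<partial>lborel)"

definition slice_L1 :: "real \<Rightarrow> ennreal" where
  "slice_L1 t = (\<integral>\<^sup>+x. ennreal \<bar>f t x\<bar> \<partial>lborel)"

definition slice_coeff :: "nat \<Rightarrow> real \<Rightarrow> real" where
  "slice_coeff k t = (\<integral>x. f t x * sin_basis k x \<partial>lborel)"

lemma L2norm_QT_eq: "L2norm_QT T f = sqrt energy"
  unfolding L2norm_QT_def energy_def ..

lemma energy_nonneg: "0 \<le> energy"
  unfolding energy_def set_lebesgue_integral_def
  by (rule integral_nonneg_AE) (auto split: split_indicator)

lemma f_eq_0_outside: "x \<notin> {0<..<1} \<Longrightarrow> f t x = 0"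
  using window support by blast

lemma f_measurable [measurable]: "(\<lambda>(t,x). f t x) \<in> borel_measurable (lborel \<Otimes>\<^sub>M lborel)"
  using L2 by (simp add: is_L2_QT_def)

lemma slice_measurable [measurable]: "f t \<in> borel_measurable lborel"
  using measurable_Pair2[OF f_measurable, of t] by simp

lemma slice_energy_measurable [measurable]: "slice_energy \<in> borel_measurable lborel"
  unfolding slice_energy_def by measurable

lemma slice_L1_measurable [measurable]: "slice_L1 \<in> borel_measurable lborel"
  unfolding slice_L1_def by measurable

lemma slice_coeff_measurable [measurable]: "slice_coeff k \<in> borel_measurable lborel"
  unfolding slice_coeff_def by measurable

lemma space_integral_measurable [measurable]: "space_integral f \<in> borel_measurable lborel"
  unfolding space_integral_def by measurable

lemma nn_integral_slice_energy: "(\<integral>\<^sup>+t. slice_energy t \<partial>time_measure T) = ennreal energy"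
proof -
  let ?Q = "{0<..<T} \<times> {0<..<1} :: (real \<times> real) set"
  let ?F = "\<lambda>z. ennreal (indicator ?Q z * (case z of (t,x) \<Rightarrow> (f t x)^2))"
  have [measurable]: "?F \<in> borel_measurable (lborel \<Otimes>\<^sub>M lborel)" by measurable
  have slice: "(\<integral>\<^sup>+x. ennreal (indicator ?Q (t, x) * (f t x)^2) \<partial>lborel)
      = slice_energy t * indicator {0<..<T} t" for t
    unfolding slice_energy_def using f_eq_0_outside
    by (cases "t \<in> {0<..<T}") (auto intro!: nn_integral_cong split: split_indicator)
  have "ennreal energy = integral\<^sup>N (lborel \<Otimes>\<^sub>M lborel) ?F"
    using L2 unfolding energy_def set_lebesgue_integral_def is_L2_QT_def set_integrable_def
    by (subst nn_integral_eq_integral) (auto split: split_indicator)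
  also have "\<dots> = (\<integral>\<^sup>+t. \<integral>\<^sup>+x. ?F (t, x) \<partial>lborel \<partial>lborel)"
    by (rule lborel.nn_integral_fst[symmetric]) simp
  also have "\<dots> = (\<integral>\<^sup>+t. slice_energy t * indicator {0<..<T} t \<partial>lborel)"
    by (simp add: slice)
  also have "\<dots> = (\<integral>\<^sup>+t. slice_energy t \<partial>time_measure T)"
    unfolding time_measure_def by (rule nn_integral_restrict_space[symmetric]) simp
  finally show ?thesis ..
qed

lemma nn_integral_cmult_slice_energy:
  "(\<integral>\<^sup>+t. ennreal c * slice_energy t \<partial>time_measure T) = ennreal (c * energy)" if "0 \<le> c"
  using that energy_nonneg
  by (simp add: nn_integral_cmult measurable_time_measure nn_integral_slice_energy ennreal_mult)

lemma slice_L1_sq_le: "(slice_L1 t)^2 \<le> ennreal (2 * \<epsilon>) * slice_energy t"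
proof -
  let ?w = "{x0 - \<epsilon><..<x0 + \<epsilon>}"
  have "slice_L1 t = (\<integral>\<^sup>+x. ennreal \<bar>f t x\<bar> * indicator ?w x \<partial>lborel)"
    unfolding slice_L1_def by (intro nn_integral_cong) (auto split: split_indicator simp: support)
  also have "\<dots>^2 \<le> (\<integral>\<^sup>+x. (ennreal \<bar>f t x\<bar>)^2 \<partial>lborel) * (\<integral>\<^sup>+x. (indicator ?w x)^2 \<partial>lborel)"
    by (rule Cauchy_Schwarz_nn_integral) simp_all
  also have "(\<integral>\<^sup>+x. (ennreal \<bar>f t x\<bar>)^2 \<partial>lborel) = slice_energy t"
    unfolding slice_energy_def by (intro nn_integral_cong) (simp add: ennreal_power)
  also have "(\<integral>\<^sup>+x. (indicator ?w x :: ennreal)^2 \<partial>lborel) = ennreal (2 * \<epsilon>)"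
    using eps_pos by (subst nn_integral_cong[where v="indicator ?w"]) (auto split: split_indicator)
  finally show ?thesis by (simp add: mult.commute)
qed

lemma abs_space_integral_le: "ennreal \<bar>space_integral f t\<bar> \<le> slice_L1 t"
  unfolding space_integral_def slice_L1_def by (rule ennreal_abs_integral_le)

lemma square_integrable_space_integral: "square_integrable (time_measure T) (space_integral f)"
  and L2_sqnorm_space_integral_le: "L2_sqnorm (time_measure T) (space_integral f) \<le> 2 * \<epsilon> * energy"
proof -
  have [measurable]: "space_integral f \<in> borel_measurable (time_measure T)"
    by (intro measurable_time_measure space_integral_measurable)
  have "ennreal ((space_integral f t)^2) \<le> ennreal (2 * \<epsilon>) * slice_energy t" for t
  proof -
    have "ennreal ((space_integral f t)^2) = (ennreal \<bar>space_integral f t\<bar>)^2"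
      by (simp add: ennreal_power)
    also have "\<dots> \<le> (slice_L1 t)^2"
      by (intro power_mono abs_space_integral_le) simp
    finally show ?thesis using slice_L1_sq_le[of t] by simp
  qed
  then have bound: "(\<integral>\<^sup>+t. ennreal ((space_integral f t)^2) \<partial>time_measure T) \<le> ennreal (2 * \<epsilon> * energy)"
    using eps_pos by (subst nn_integral_cmult_slice_energy[symmetric]) (auto intro: nn_integral_mono)
  then have "integrable (time_measure T) (\<lambda>t. (space_integral f t)^2)"
    by (intro integrableI_bounded) (auto simp: le_less_trans)
  then show sq: "square_integrable (time_measure T) (space_integral f)"
    by (simp add: square_integrable_def)
  show "L2_sqnorm (time_measure T) (space_integral f) \<le> 2 * \<epsilon> * energy"
    using bound eps_pos energy_nonneg by (simp add: nn_integral_square_eq_L2_sqnorm[OF sq] ennreal_le_iff)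
qed

lemma nn_integral_slice_L1_le:
  "(\<integral>\<^sup>+t. slice_L1 t \<partial>time_measure T) \<le> ennreal (sqrt (2 * \<epsilon> * energy * T))"
proof (rule ennreal_le_sqrt_if_square_le)
  have "(\<integral>\<^sup>+t. slice_L1 t * 1 \<partial>time_measure T)^2
      \<le> (\<integral>\<^sup>+t. (slice_L1 t)^2 \<partial>time_measure T) * (\<integral>\<^sup>+t. 1^2 \<partial>time_measure T)"
    by (rule Cauchy_Schwarz_nn_integral) (auto intro: measurable_time_measure)
  also have "(\<integral>\<^sup>+t. (slice_L1 t)^2 \<partial>time_measure T) \<le> ennreal (2 * \<epsilon> * energy)"
    using eps_pos by (subst nn_integral_cmult_slice_energy[symmetric]) (auto intro: nn_integral_mono slice_L1_sq_le)
  also have "(\<integral>\<^sup>+t. (1::ennreal)^2 \<partial>time_measure T) = ennreal T"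
    using emeasure_time_measure[OF T_pos] by simp
  finally show "(\<integral>\<^sup>+t. slice_L1 t \<partial>time_measure T)^2 \<le> ennreal (2 * \<epsilon> * energy * T)"
    using eps_pos energy_nonneg T_pos by (simp add: ennreal_mult mult_right_mono)
qed (use eps_pos energy_nonneg T_pos in simp)

lemma integrable_if_le_slice_L1:
  assumes "g \<in> borel_measurable (time_measure T)"
    and "\<And>t. t \<in> {0<..<T} \<Longrightarrow> ennreal \<bar>g t\<bar> \<le> ennreal C * slice_L1 t"
  shows "integrable (time_measure T) g"
proof (rule integrableI_bounded)
  have "(\<integral>\<^sup>+t. ennreal (norm (g t)) \<partial>time_measure T) \<le> (\<integral>\<^sup>+t. ennreal C * slice_L1 t \<partial>time_measure T)"
    using assms(2) by (intro nn_integral_mono) simp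
  also have "\<dots> = ennreal C * (\<integral>\<^sup>+t. slice_L1 t \<partial>time_measure T)"
    by (intro nn_integral_cmult measurable_time_measure slice_L1_measurable)
  also have "\<dots> < \<infinity>"
    using nn_integral_slice_L1_le by (simp add: ennreal_mult_less_top le_less_trans)
  finally show "(\<integral>\<^sup>+t. ennreal (norm (g t)) \<partial>time_measure T) < \<infinity>" .
qed (rule assms(1))

lemma abs_slice_coeff_le: "ennreal \<bar>slice_coeff k t\<bar> \<le> ennreal (sqrt 2) * slice_L1 t"
proof -
  have "(\<integral>\<^sup>+x. ennreal \<bar>f t x * sin_basis k x\<bar> \<partial>lborel) \<le> (\<integral>\<^sup>+x. ennreal (sqrt 2) * ennreal \<bar>f t x\<bar> \<partial>lborel)"
    using abs_mult_sin_basis_le[of "f t _" k]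
    by (intro nn_integral_mono) (simp add: ennreal_mult[symmetric] ennreal_leI)
  also have "\<dots> = ennreal (sqrt 2) * slice_L1 t"
    unfolding slice_L1_def by (rule nn_integral_cmult) measurable
  finally show ?thesis
    unfolding slice_coeff_def by (rule order_trans[OF ennreal_abs_integral_le])
qed

lemma abs_f_mult_sin_basis_diff_le:
  "\<bar>f t x * (sin_basis k x0 - sin_basis k x)\<bar> \<le> sin_basis_lip k * \<epsilon> * \<bar>f t x\<bar>"
proof (cases "x \<in> {x0 - \<epsilon><..<x0 + \<epsilon>}")
  case True
  then have "sin_basis_lip k * \<bar>x0 - x\<bar> \<le> sin_basis_lip k * \<epsilon>"
    using sin_basis_lip_pos[of k] by (intro mult_left_mono) auto
  then have "\<bar>sin_basis k x0 - sin_basis k x\<bar> \<le> sin_basis_lip k * \<epsilon>"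
    using abs_sin_basis_diff_le[of k x0 x] by linarith
  then have "\<bar>f t x\<bar> * \<bar>sin_basis k x0 - sin_basis k x\<bar> \<le> \<bar>f t x\<bar> * (sin_basis_lip k * \<epsilon>)"
    by (intro mult_left_mono) simp_all
  then show ?thesis by (simp add: abs_mult mult.commute)
qed (simp add: support)

lemma slice_coeff_approx:
  "ennreal \<bar>sin_basis k x0 * space_integral f t - slice_coeff k t\<bar> \<le> ennreal (sin_basis_lip k * \<epsilon>) * slice_L1 t"
proof (cases "slice_L1 t = \<infinity>")
  case True
  then show ?thesis using sin_basis_lip_pos[of k] eps_pos by (simp add: ennreal_mult_top)
next
  case False
  then have int_f: "integrable lborel (f t)"
    by (intro integrableI_bounded) (simp_all add: slice_L1_def less_top)
  have "sin_basis k x0 * space_integral f t - slice_coeff k t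
      = (\<integral>x. f t x * (sin_basis k x0 - sin_basis k x) \<partial>lborel)"
    using int_f integrable_mult_sin_basis[OF int_f] unfolding space_integral_def slice_coeff_def
    by (simp add: right_diff_distrib mult.commute)
  then have "ennreal \<bar>sin_basis k x0 * space_integral f t - slice_coeff k t\<bar>
      \<le> (\<integral>\<^sup>+x. ennreal \<bar>f t x * (sin_basis k x0 - sin_basis k x)\<bar> \<partial>lborel)"
    by (simp only: ennreal_abs_integral_le)
  also have "\<dots> \<le> (\<integral>\<^sup>+x. ennreal (sin_basis_lip k * \<epsilon>) * ennreal \<bar>f t x\<bar> \<partial>lborel)"
  proof (rule nn_integral_mono)
    fix x
    show "ennreal \<bar>f t x * (sin_basis k x0 - sin_basis k x)\<bar>
        \<le> ennreal (sin_basis_lip k * \<epsilon>) * ennreal \<bar>f t x\<bar>"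
      using abs_f_mult_sin_basis_diff_le[of t x k] sin_basis_lip_pos[of k] eps_pos
      by (simp add: ennreal_mult[symmetric] ennreal_leI)
  qed
  also have "\<dots> = ennreal (sin_basis_lip k * \<epsilon>) * slice_L1 t"
    unfolding slice_L1_def by (rule nn_integral_cmult) measurable
  finally show ?thesis .
qed

lemma integrable_moment_kernel_space_integral:
  "integrable (time_measure T) (\<lambda>t. moment_kernel T x0 k t * space_integral f t)"
proof (rule integrable_if_le_slice_L1[where C="sqrt 2"])
  show "ennreal \<bar>moment_kernel T x0 k t * space_integral f t\<bar> \<le> ennreal (sqrt 2) * slice_L1 t"
    if "t \<in> {0<..<T}" for t
    using abs_moment_kernel_le[of t T x0 k] that
      mult_mono[OF ennreal_leI abs_space_integral_le, of "\<bar>moment_kernel T x0 k t\<bar>" "sqrt 2" t]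
    by (simp add: abs_mult ennreal_mult)
qed (unfold moment_kernel_def, intro measurable_time_measure, measurable)

lemma integrable_exp_decay_slice_coeff:
  "integrable (time_measure T) (\<lambda>t. exp (- eigval k * (T - t)) * slice_coeff k t)"
proof (rule integrable_if_le_slice_L1[where C="sqrt 2"])
  show "ennreal \<bar>exp (- eigval k * (T - t)) * slice_coeff k t\<bar> \<le> ennreal (sqrt 2) * slice_L1 t"
    if "t \<in> {0<..<T}" for t
  proof -
    have "\<bar>exp (- eigval k * (T - t)) * slice_coeff k t\<bar> \<le> \<bar>slice_coeff k t\<bar>"
      using that by (intro abs_exp_decay_mult_le) simp
    then show ?thesis using abs_slice_coeff_le[of k t] by (meson ennreal_leI order_trans)
  qed
qed (intro measurable_time_measure, measurable)

lemma moment_kernel_inner_approx: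
  "\<bar>L2_inner (time_measure T) (moment_kernel T x0 k) (space_integral f)
      - (\<integral>t. exp (- eigval k * (T - t)) * slice_coeff k t \<partial>time_measure T)\<bar>
    \<le> sin_basis_lip k * \<epsilon> * sqrt (2 * \<epsilon> * energy * T)"
proof -
  let ?g = "\<lambda>t. exp (- eigval k * (T - t))"
  let ?d = "\<lambda>t. sin_basis k x0 * space_integral f t - slice_coeff k t"
  have "L2_inner (time_measure T) (moment_kernel T x0 k) (space_integral f)
      - (\<integral>t. ?g t * slice_coeff k t \<partial>time_measure T) = (\<integral>t. ?g t * ?d t \<partial>time_measure T)"
    using integrable_moment_kernel_space_integral integrable_exp_decay_slice_coeff
    unfolding L2_inner_def moment_kernel_def by (simp add: algebra_simps)
  then have "ennreal \<bar>L2_inner (time_measure T) (moment_kernel T x0 k) (space_integral f)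
      - (\<integral>t. ?g t * slice_coeff k t \<partial>time_measure T)\<bar> \<le> (\<integral>\<^sup>+t. ennreal \<bar>?g t * ?d t\<bar> \<partial>time_measure T)"
    by (simp only: ennreal_abs_integral_le)
  also have "\<dots> \<le> (\<integral>\<^sup>+t. ennreal (sin_basis_lip k * \<epsilon>) * slice_L1 t \<partial>time_measure T)"
  proof (rule nn_integral_mono)
    fix t assume "t \<in> space (time_measure T)"
    then have "\<bar>?g t * ?d t\<bar> \<le> \<bar>?d t\<bar>" by (intro abs_exp_decay_mult_le) simp
    then show "ennreal \<bar>?g t * ?d t\<bar> \<le> ennreal (sin_basis_lip k * \<epsilon>) * slice_L1 t"
      using slice_coeff_approx[of k t] by (meson ennreal_leI order_trans)
  qed
  also have "\<dots> = ennreal (sin_basis_lip k * \<epsilon>) * (\<integral>\<^sup>+t. slice_L1 t \<partial>time_measure T)"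
    by (intro nn_integral_cmult measurable_time_measure slice_L1_measurable)
  also have "\<dots> \<le> ennreal (sin_basis_lip k * \<epsilon>) * ennreal (sqrt (2 * \<epsilon> * energy * T))"
    by (intro mult_left_mono nn_integral_slice_L1_le) simp
  also have "\<dots> = ennreal (sin_basis_lip k * \<epsilon> * sqrt (2 * \<epsilon> * energy * T))"
    using sin_basis_lip_pos[of k] eps_pos T_pos energy_nonneg by (intro ennreal_mult[symmetric]) simp_all
  finally show ?thesis
    using sin_basis_lip_pos[of k] eps_pos T_pos energy_nonneg by (simp add: ennreal_le_iff)
qed

lemma Duhamel_term_eq:
  "(LINT t:{0<..<T}|lborel. exp (- eigval k * (T - t)) * (LINT x:{0<..<1}|lborel. f t x * sin_basis k x))
    = (\<integral>t. exp (- eigval k * (T - t)) * slice_coeff k t \<partial>time_measure T)"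
proof -
  have "(LINT x:{0<..<1}|lborel. f t x * sin_basis k x) = slice_coeff k t" for t
    unfolding slice_coeff_def set_lebesgue_integral_def using f_eq_0_outside
    by (intro Bochner_Integration.integral_cong) (auto split: split_indicator)
  then show ?thesis
    unfolding time_measure_def set_lebesgue_integral_def by (subst integral_restrict_space) auto
qed

lemma moment_error_le:
  assumes "final_coeff T u0 f k = 0"
  shows "\<bar>L2_inner (time_measure T) (moment_kernel T x0 k) (space_integral f) + exp (- eigval k * T) * coeff u0 k\<bar>
    \<le> sin_basis_lip k * sqrt (2 * T) * \<epsilon> * (sqrt \<epsilon> * L2norm_QT T f)"
proof -
  have "sqrt (2 * \<epsilon> * energy * T) = sqrt (2 * T) * (sqrt \<epsilon> * L2norm_QT T f)"
    by (simp add: L2norm_QT_eq real_sqrt_mult[symmetric] ac_simps)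
  then show ?thesis
    using assms moment_kernel_inner_approx[of k]
    unfolding final_coeff_def Duhamel_term_eq by (simp add: ac_simps)
qed

lemma L2_sqnorm_space_integral_le_sq:
  "L2_sqnorm (time_measure T) (space_integral f) \<le> 2 * (sqrt \<epsilon> * L2norm_QT T f)^2"
  using L2_sqnorm_space_integral_le eps_pos energy_nonneg
  by (simp add: L2norm_QT_eq power_mult_distrib)

end

lemma pointwise_null_controllable_if_moments:
  assumes \<psi>: "square_integrable (time_measure T) \<psi>"
    and moments: "\<And>k. k \<ge> 1 \<Longrightarrow>
      L2_inner (time_measure T) (moment_kernel T x0 k) \<psi> = - exp (- eigval k * T) * coeff u0 k"
  shows "pointwise_null_controllable x0 T u0"
proof -
  define \<eta> where "\<eta> t = indicator {0<..<T} t * \<psi> t" for t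
  have "\<psi> \<in> borel_measurable (restrict_space lborel {0<..<T})"
    using \<psi> by (simp add: square_integrable_def time_measure_def)
  then have "\<eta> \<in> borel_measurable lborel"
    unfolding \<eta>_def by (subst (asm) borel_measurable_restrict_space_iff) auto
  moreover have "set_integrable lborel {0<..<T} (\<lambda>t. (\<eta> t)^2)"
  proof -
    have "integrable (restrict_space lborel {0<..<T}) (\<lambda>t. (\<psi> t)^2)"
      using \<psi> by (simp add: square_integrable_def time_measure_def)
    then have "integrable lborel (\<lambda>t. indicator {0<..<T} t *\<^sub>R (\<psi> t)^2)"
      by (subst (asm) integrable_restrict_space) auto
    moreover have "(\<lambda>t. indicator {0<..<T} t *\<^sub>R (\<psi> t)^2) = (\<lambda>t. indicator {0<..<T} t *\<^sub>R (\<eta> t)^2)"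
      unfolding \<eta>_def by (auto split: split_indicator)
    ultimately show ?thesis unfolding set_integrable_def by simp
  qed
  moreover have "exp (- eigval k * T) * coeff u0 k +
      sin_basis k x0 * (LINT t:{0<..<T}|lborel. exp (- eigval k * (T - t)) * \<eta> t) = 0" if "k \<ge> 1" for k
  proof -
    have "(LINT t:{0<..<T}|lborel. exp (- eigval k * (T - t)) * \<eta> t)
        = (\<integral>t. indicator {0<..<T} t *\<^sub>R (exp (- eigval k * (T - t)) * \<psi> t) \<partial>lborel)"
      unfolding set_lebesgue_integral_def \<eta>_def
      by (intro Bochner_Integration.integral_cong) (auto split: split_indicator)
    also have "\<dots> = (\<integral>t. exp (- eigval k * (T - t)) * \<psi> t \<partial>time_measure T)"
      unfolding time_measure_def by (subst integral_restrict_space) auto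
    finally show ?thesis
      using moments[OF that] by (simp add: L2_inner_def moment_kernel_def mult.assoc)
  qed
  ultimately show ?thesis
    unfolding pointwise_null_controllable_def by blast
qed

lemma moments_space_integral_tendsto:
  fixes e :: "nat \<Rightarrow> real" and F :: "nat \<Rightarrow> real \<Rightarrow> real \<Rightarrow> real"
  assumes controls: "\<And>n. localized_control T x0 (e n) (F n)"
    and null: "\<And>n k. k \<ge> 1 \<Longrightarrow> final_coeff T u0 (F n) k = 0"
    and e: "e \<longlonglongrightarrow> 0"
    and bounded: "\<And>n. sqrt (e n) * L2norm_QT T (F n) \<le> B"
  shows "(\<lambda>n. L2_inner (time_measure T) (moment_kernel T x0 k) (space_integral (F n)))
    \<longlonglongrightarrow> - exp (- eigval k * T) * coeff u0 k"
proof (cases "k = 0")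
  case False
  let ?C = "sin_basis_lip k * sqrt (2 * T)"
  let ?b = "- exp (- eigval k * T) * coeff u0 k"
  have "\<bar>L2_inner (time_measure T) (moment_kernel T x0 k) (space_integral (F n)) - ?b\<bar> \<le> ?C * B * e n"
    for n
  proof -
    have "0 \<le> ?C * e n"
      using sin_basis_lip_pos[of k] controls[of n] by (simp add: localized_control_def)
    then have "?C * e n * (sqrt (e n) * L2norm_QT T (F n)) \<le> ?C * e n * B"
      by (rule mult_left_mono[OF bounded[of n]])
    then show ?thesis
      using localized_control.moment_error_le[OF controls[of n] null[of k n]] False
      by (simp add: ac_simps)
  qed
  then have "(\<lambda>n. L2_inner (time_measure T) (moment_kernel T x0 k) (space_integral (F n)) - ?b) \<longlonglongrightarrow> 0"
    by (intro Lim_null_comparison[OF _ tendsto_mult_right_zero[OF e, where c="?C * B"]]) simp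
  then show ?thesis by (rule LIM_zero_cancel)
qed simp

lemma pointwise_null_controllable_if_bounded_controls:
  fixes e :: "nat \<Rightarrow> real" and F :: "nat \<Rightarrow> real \<Rightarrow> real \<Rightarrow> real"
  assumes T: "0 < T" and e_pos: "\<And>n. 0 < e n"
    and window: "\<And>n. {x0 - e n<..<x0 + e n} \<subseteq> {0<..<1}"
    and null: "\<And>n. null_control T {x0 - e n<..<x0 + e n} u0 (F n)"
    and e: "e \<longlonglongrightarrow> 0"
    and bounded: "\<And>n. sqrt (e n) * L2norm_QT T (F n) \<le> B"
  shows "pointwise_null_controllable x0 T u0"
proof -
  interpret gram_schmidt "time_measure T" "moment_kernel T x0"
    using finite_measure_time_measure[OF T] square_integrable_moment_kernel[OF T]
    by (simp add: gram_schmidt_def gram_schmidt_axioms_def)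
  have controls: "localized_control T x0 (e n) (F n)" for n
    using T e_pos[of n] window[of n] null[of n] by (simp add: localized_control_def null_control_def)
  have final_coeff: "final_coeff T u0 (F n) k = 0" if "k \<ge> 1" for n k
    using null[of n] that by (simp add: null_control_def)
  have bound: "L2_sqnorm (time_measure T) (space_integral (F n)) \<le> 2 * B^2" for n
  proof -
    interpret localized_control T x0 "e n" "F n" by (rule controls)
    have "0 \<le> sqrt (e n) * L2norm_QT T (F n)"
      using eps_pos energy_nonneg by (simp add: L2norm_QT_eq)
    then show ?thesis
      using L2_sqnorm_space_integral_le_sq power_mono[OF bounded[of n], of 2] by simp
  qed
  obtain \<psi> where "square_integrable (time_measure T) \<psi>"
    and "\<And>k. L2_inner (time_measure T) (moment_kernel T x0 k) \<psi> = - exp (- eigval k * T) * coeff u0 k"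
    using L2_moment_limits_attained[OF localized_control.square_integrable_space_integral[OF controls]
        bound moments_space_integral_tendsto[OF controls final_coeff e bounded]] by blast
  then show ?thesis
    by (intro pointwise_null_controllable_if_moments) auto
qed

lemma bounded_sequence_if_not_filterlim_at_top:
  fixes g :: "real \<Rightarrow> real"
  assumes "\<not> filterlim g at_top (at_right 0)" and "0 < d"
  obtains e B where "\<And>n. 0 < e n \<and> e n < d" and "e \<longlonglongrightarrow> 0" and "\<And>n. g (e n) \<le> B"
proof -
  obtain B where "\<not> (\<forall>\<^sub>F \<epsilon> in at_right 0. B \<le> g \<epsilon>)"
    using assms(1) unfolding filterlim_at_top by blast
  then have "\<exists>\<epsilon>>0. \<epsilon> < b \<and> g \<epsilon> < B" if "0 < b" for b
    using that unfolding eventually_at_right_field by (meson not_le)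
  from this[of "min d (inverse (Suc n))" for n]
  have "\<forall>n. \<exists>\<epsilon>>0. \<epsilon> < min d (inverse (Suc n)) \<and> g \<epsilon> < B"
    using assms(2) by simp
  then obtain e where e: "\<And>n. 0 < e n \<and> e n < min d (inverse (Suc n)) \<and> g (e n) < B"
    by metis
  show thesis
  proof
    show "0 < e n \<and> e n < d" and "g (e n) \<le> B" for n
      using e[of n] by auto
    show "e \<longlonglongrightarrow> 0"
      using e by (intro Lim_null_comparison[OF _ LIMSEQ_inverse_real_of_nat]) (simp add: less_imp_le)
  qed
qed

theorem theorem2:
  fixes x0 T :: real and u0 :: "real \<Rightarrow> real"
    and \<psi> :: "real \<Rightarrow> real \<Rightarrow> real \<Rightarrow> real"
  assumes "0 < x0" and "x0 < 1" and "0 < T" and "ereal T \<le> T0 x0"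
    and "is_L2_01 u0"
    and "\<not> pointwise_null_controllable x0 T u0"
    and "\<forall>\<epsilon>. 0 < \<epsilon> \<and> {x0 - \<epsilon><..<x0 + \<epsilon>} \<subseteq> {0<..<1} \<longrightarrow>
           optimal_null_control T {x0 - \<epsilon><..<x0 + \<epsilon>} u0 (\<psi> \<epsilon>)"
  shows "filterlim (\<lambda>\<epsilon>. sqrt \<epsilon> * L2norm_QT T (\<psi> \<epsilon>)) at_top (at_right 0)"
proof (rule ccontr)
  assume "\<not> ?thesis"
  then obtain e B where e: "\<And>n. 0 < e n \<and> e n < min x0 (1 - x0)" and lim: "e \<longlonglongrightarrow> 0"
    and bounded: "\<And>n. sqrt (e n) * L2norm_QT T (\<psi> (e n)) \<le> B"
    using bounded_sequence_if_not_filterlim_at_top[of _ "min x0 (1 - x0)"] assms(1,2) by auto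
  have window: "{x0 - e n<..<x0 + e n} \<subseteq> {0<..<1}" for n
    using e[of n] by auto
  then have "null_control T {x0 - e n<..<x0 + e n} u0 (\<psi> (e n))" for n
    using assms(7) e[of n] by (simp add: optimal_null_control_def)
  then have "pointwise_null_controllable x0 T u0"
    using pointwise_null_controllable_if_bounded_controls[OF assms(3) _ window _ lim bounded] e
    by blast
  with assms(6) show False ..
qed

end
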